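(* Let $f=h+\overline{g}$ be harmonic in $\mathbb{C}$, where $h$ and $g$ are entire holomorphic functions. If $f(S)\cup C(f,\infty)$ has empty interior, then either (i) $h$ and $g$ are both polynomials in $z$, or (ii) $h$ and $g$ are both entire transcendental functions.
   Context: Writing $f=u+iv$, $J_f=u_xv_y-u_yv_x$ and $S=\{z\in\mathbb{C}: J_f(z)=0\}$. $C(f,\infty)$ is the set of finite points $\zeta\in\mathbb{C}$ for which there is a sequence $(z_n)$ with $|z_n|\to\infty$ and $f(z_n)\to\zeta$. *)

theory Defs
  imports "HOL-Complex_Analysis.Complex_Analysis" "HOL-Computational_Algebra.Polynomial"
begin

definition re_part :: "(complex \<Rightarrow> complex) \<Rightarrow> real \<Rightarrow> real \<Rightarrow> real" where
  "re_part f x y = Re (f (Complex x y))"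

definition im_part :: "(complex \<Rightarrow> complex) \<Rightarrow> real \<Rightarrow> real \<Rightarrow> real" where
  "im_part f x y = Im (f (Complex x y))"

definition jacobian_f :: "(complex \<Rightarrow> complex) \<Rightarrow> complex \<Rightarrow> real" where
  "jacobian_f f z =
     deriv (\<lambda>x. re_part f x (Im z)) (Re z) * deriv (\<lambda>y. im_part f (Re z) y) (Im z)
   - deriv (\<lambda>y. re_part f (Re z) y) (Im z) * deriv (\<lambda>x. im_part f x (Im z)) (Re z)"

definition crit_set :: "(complex \<Rightarrow> complex) \<Rightarrow> complex set" where
  "crit_set f = {z. jacobian_f f z = 0}"

definition cluster_set_infty :: "(complex \<Rightarrow> complex) \<Rightarrow> complex set" where
  "cluster_set_infty f = {\<zeta>. \<exists>zs :: nat \<Rightarrow> complex.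
      filterlim (\<lambda>n. norm (zs n)) at_top sequentially \<and> (\<lambda>n. f (zs n)) \<longlonglongrightarrow> \<zeta>}"

definition is_polynomial_fun :: "(complex \<Rightarrow> complex) \<Rightarrow> bool" where
  "is_polynomial_fun h \<longleftrightarrow> (\<exists>p :: complex poly. h = poly p)"

end

theory Submission
  imports Defs
begin

text \<open>Suppose \<open>h = p\<close> is a polynomial but \<open>g\<close> is not; we show that then \<open>C(f,\<infinity>) = \<complex>\<close>, contradicting
  the hypothesis (the case of polynomial \<open>g\<close> follows by conjugation). If some \<open>\<zeta>\<close> were missing from
  \<open>C(f,\<infinity>)\<close>, then \<open>q + cnj \<circ> g\<close> with \<open>q = p - \<zeta>\<close> would stay away from \<open>0\<close> near \<open>\<infinity>\<close>.
  If \<open>q\<close> is constant, the entire function \<open>g + cnj (q 0)\<close> has finitely many zeros and is bounded below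
  near \<open>\<infinity>\<close>, hence is a polynomial. If \<open>n = deg q > 0\<close>, the entire function
  \<open>G\<^sub>r z = z\<^sup>n g z + \<Sum>\<^sub>k cnj (q\<^sub>k) r\<^sup>2\<^sup>k z\<^sup>n\<^sup>-\<^sup>k\<close> equals \<open>z\<^sup>n cnj (q z + cnj (g z))\<close> on \<open>|z| = r\<close>.
  By the argument principle it has \<open>n\<close> minus the winding number of \<open>q + cnj \<circ> g\<close> zeros in \<open>|z| < r\<close>,
  a number independent of large \<open>r\<close>; these zeros stay away from \<open>0\<close>, and \<open>|G\<^sub>r| \<ge> \<epsilon> r\<^sup>n\<close> on the
  circle. Dividing out the zeros and applying the minimum modulus principle and Harnack's inequality
  to the zero-free quotient bounds \<open>G\<^sub>r\<close> polynomially in \<open>r\<close> on \<open>|z| \<le> r/2\<close>. This gives polynomial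
  growth of \<open>g\<close>, so \<open>g\<close> is a polynomial by Liouville's theorem.\<close>

lemma polynomial_growth_imp_is_polynomial_fun:
  assumes holg: "g holomorphic_on UNIV"
    and bnd: "\<And>z. A \<le> norm z \<Longrightarrow> norm (g z) \<le> B * norm z ^ n"
  shows "is_polynomial_fun g"
proof -
  define c where "c k = (deriv ^^ k) g 0 / fact k" for k
  have "g z = (\<Sum>k\<le>n. c k * z ^ k)" for z
    using Liouville_polynomial[OF holg bnd] unfolding c_def by blast
  then have "g = poly (\<Sum>k\<le>n. monom (c k) k)"
    by (simp add: fun_eq_iff poly_sum poly_monom)
  then show ?thesis unfolding is_polynomial_fun_def by blast
qed

lemma is_polynomial_fun_add_const_iff:
  "is_polynomial_fun (\<lambda>z. g z + c) \<longleftrightarrow> is_polynomial_fun g"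
proof
  assume "is_polynomial_fun (\<lambda>z. g z + c)"
  then obtain p where "(\<lambda>z. g z + c) = poly p" unfolding is_polynomial_fun_def by blast
  then have "g = poly (p - [:c:])" by (simp add: fun_eq_iff) (metis add_diff_cancel)
  then show "is_polynomial_fun g" unfolding is_polynomial_fun_def by blast
next
  assume "is_polynomial_fun g"
  then obtain p where "g = poly p" unfolding is_polynomial_fun_def by blast
  then have "(\<lambda>z. g z + c) = poly (p + [:c:])" by (simp add: fun_eq_iff)
  then show "is_polynomial_fun (\<lambda>z. g z + c)" unfolding is_polynomial_fun_def by blast
qed

lemma norm_prod_list_diff_le:
  fixes z :: complex
  assumes "\<And>a. a \<in> set as \<Longrightarrow> norm (z - a) \<le> B"
  shows "norm (\<Prod>a\<leftarrow>as. z - a) \<le> B ^ length as"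
  using assms
proof (induction as)
  case (Cons a as)
  have "0 \<le> B" using Cons.prems[of a] by (meson list.set_intros(1) norm_ge_zero order_trans)
  with Cons show ?case by (simp add: norm_mult mult_mono)
qed simp

lemma norm_prod_list_diff_ge:
  fixes z :: complex
  assumes "\<And>a. a \<in> set as \<Longrightarrow> \<rho> \<le> norm (z - a)" and "0 \<le> \<rho>"
  shows "\<rho> ^ length as \<le> norm (\<Prod>a\<leftarrow>as. z - a)"
  using assms by (induction as) (simp_all add: norm_mult mult_mono)

lemma minimum_modulus_cball:
  fixes E :: "complex \<Rightarrow> complex"
  assumes holE: "E holomorphic_on cball 0 r" and nz: "\<And>z. z \<in> cball 0 r \<Longrightarrow> E z \<noteq> 0"
    and "0 < r" and "0 < m" and sphere: "\<And>z. z \<in> sphere 0 r \<Longrightarrow> m \<le> norm (E z)"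
    and z: "z \<in> cball 0 r"
  shows "m \<le> norm (E z)"
proof -
  have hol: "(\<lambda>w. 1 / E w) holomorphic_on interior (cball 0 r)"
    using nz by (intro holomorphic_intros holomorphic_on_subset[OF holE]) auto
  have cont: "continuous_on (closure (cball 0 r)) (\<lambda>w. 1 / E w)"
    using nz holE by (intro continuous_intros holomorphic_on_imp_continuous_on) auto
  have "norm (1 / E z) \<le> 1 / m"
  proof (rule maximum_modulus_frontier[OF hol cont])
    fix w assume "w \<in> frontier (cball (0::complex) r)"
    then have "m \<le> norm (E w)" using sphere \<open>0 < r\<close> by (simp add: frontier_cball)
    then show "norm (1 / E w) \<le> 1 / m" using \<open>0 < m\<close> by (simp add: norm_divide divide_simps)
  qed (use z in auto)
  then show ?thesis using \<open>0 < m\<close> nz[OF z] by (simp add: norm_divide divide_simps)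
qed

lemma norm_diff_of_real_less_norm_add:
  fixes u :: complex
  assumes "0 < Re u" and "0 < b"
  shows "norm (u - of_real b) < norm (u + of_real b)"
proof -
  have "(Re u - b)\<^sup>2 + (Im u)\<^sup>2 < (Re u + b)\<^sup>2 + (Im u)\<^sup>2"
    using assms by (simp add: power2_eq_square algebra_simps)
  then have "norm (u - of_real b) ^ 2 < norm (u + of_real b) ^ 2" by (simp add: cmod_power2)
  then show ?thesis by (rule power_less_imp_less_base) simp
qed

text \<open>Schwarz's lemma applied to the Cayley transform \<open>(M - b) / (M + b)\<close>, which maps the right half
  plane into the unit disc.\<close>
lemma norm_le_three_if_Re_pos:
  fixes M :: "complex \<Rightarrow> complex"
  assumes holM: "M holomorphic_on ball 0 r" and pos: "\<And>w. w \<in> ball 0 r \<Longrightarrow> 0 < Re (M w)"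
    and M0: "M 0 = of_real b" and r: "0 < r" and z: "norm z \<le> r / 2"
  shows "norm (M z) \<le> 3 * b"
proof -
  have b: "0 < b" using pos[of 0] r M0 by simp
  have scaled: "of_real r * w \<in> ball 0 r" if "w \<in> ball 0 1" for w :: complex
    using that r by (simp add: norm_mult)
  have nzden: "M (of_real r * w) + of_real b \<noteq> 0" if "w \<in> ball 0 1" for w
    using pos[OF scaled[OF that]] b by (auto simp: complex_eq_iff)
  define \<phi> where "\<phi> w = (M (of_real r * w) - of_real b) / (M (of_real r * w) + of_real b)" for w
  have "(\<lambda>w. M (of_real r * w)) holomorphic_on ball 0 1"
    by (rule holomorphic_on_compose_gen[OF _ holM, unfolded o_def])
      (use scaled in \<open>auto intro!: holomorphic_intros\<close>)
  then have hol\<phi>: "\<phi> holomorphic_on ball 0 1"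
    using nzden unfolding \<phi>_def by (intro holomorphic_intros) auto
  have \<phi>0: "\<phi> 0 = 0" unfolding \<phi>_def using M0 by simp
  have \<phi>1: "norm (\<phi> w) < 1" if "norm w < 1" for w
  proof -
    have w: "w \<in> ball 0 1" using that by simp
    then show ?thesis
      unfolding \<phi>_def using norm_diff_of_real_less_norm_add[OF pos[OF scaled] b] nzden[OF w]
      by (simp add: norm_divide divide_simps)
  qed
  define \<xi> where "\<xi> = z / of_real r"
  have \<xi>: "norm \<xi> \<le> 1/2" unfolding \<xi>_def using z r by (simp add: norm_divide divide_simps)
  have \<phi>\<xi>: "norm (\<phi> \<xi>) \<le> 1/2"
    using Schwarz_Lemma(1)[OF hol\<phi> \<phi>0 \<phi>1, of \<xi>] \<xi> by simp
  have "of_real r * \<xi> = z" unfolding \<xi>_def using r by simp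
  then have den: "M z + of_real b \<noteq> 0" and \<phi>z: "\<phi> \<xi> = (M z - of_real b) / (M z + of_real b)"
    using nzden[of \<xi>] \<xi> unfolding \<phi>_def by auto
  have "1/2 \<le> norm (1 - \<phi> \<xi>)" using norm_triangle_ineq2[of 1 "\<phi> \<xi>"] \<phi>\<xi> by simp
  then have "norm (M z) * (1/2) \<le> norm (M z) * norm (1 - \<phi> \<xi>)" by (rule mult_left_mono) simp
  also have "\<dots> = b * norm (1 + \<phi> \<xi>)"
  proof -
    have "M z * (1 - \<phi> \<xi>) = of_real b * (1 + \<phi> \<xi>)" using den unfolding \<phi>z by (simp add: field_simps)
    then show ?thesis using b by (metis norm_mult norm_of_real abs_of_pos)
  qed
  also have "\<dots> \<le> b * (3/2)"
    using norm_triangle_ineq[of 1 "\<phi> \<xi>"] \<phi>\<xi> b by (intro mult_left_mono) simp_all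
  finally show ?thesis by linarith
qed

lemma Re_le_three_Re_0_Harnack:
  fixes M :: "complex \<Rightarrow> complex"
  assumes holM: "M holomorphic_on ball 0 r" and pos: "\<And>w. w \<in> ball 0 r \<Longrightarrow> 0 < Re (M w)"
    and r: "0 < r" and z: "norm z \<le> r / 2"
  shows "Re (M z) \<le> 3 * Re (M 0)"
proof -
  define M' where "M' w = M w - \<i> * of_real (Im (M 0))" for w
  have "norm (M' z) \<le> 3 * Re (M 0)"
  proof (rule norm_le_three_if_Re_pos[OF _ _ _ r z])
    show "M' holomorphic_on ball 0 r" unfolding M'_def by (intro holomorphic_intros holM)
    show "0 < Re (M' w)" if "w \<in> ball 0 r" for w unfolding M'_def using pos[OF that] by simp
    show "M' 0 = of_real (Re (M 0))" unfolding M'_def by (simp add: complex_eq_iff)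
  qed
  moreover have "Re (M z) = Re (M' z)" unfolding M'_def by simp
  ultimately show ?thesis using complex_Re_le_cmod[of "M' z"] by linarith
qed

lemma zero_free_norm_le_Harnack:
  fixes E :: "complex \<Rightarrow> complex"
  assumes holE: "E holomorphic_on ball 0 r" and r: "0 < r" and m: "0 < m"
    and lower: "\<And>w. w \<in> ball 0 r \<Longrightarrow> m < norm (E w)" and z: "norm z \<le> r / 2"
  shows "norm (E z) \<le> norm (E 0) ^ 3 / m\<^sup>2"
proof -
  have nz: "E w \<noteq> 0" if "w \<in> ball 0 r" for w
    using lower[OF that] m by auto
  obtain L where holL: "L holomorphic_on ball 0 r"
    and L: "\<And>w. w \<in> ball 0 r \<Longrightarrow> E w / of_real m = exp (L w)"
  proof (rule contractible_imp_holomorphic_log[of "\<lambda>w. E w / of_real m" "ball 0 r"])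
    show "(\<lambda>w. E w / of_real m) holomorphic_on ball 0 r" using m by (intro holomorphic_intros holE) auto
  qed (use nz m in \<open>auto simp: convex_imp_contractible\<close>)
  have expRe: "exp (Re (L w)) = norm (E w) / m" if "w \<in> ball 0 r" for w
    using arg_cong[OF L[OF that], of norm] m by (simp add: norm_exp_eq_Re norm_divide)
  have "0 < Re (L w)" if "w \<in> ball 0 r" for w
  proof -
    have "1 < exp (Re (L w))" using expRe[OF that] lower[OF that] m by simp
    then show ?thesis by simp
  qed
  then have "Re (L z) \<le> 3 * Re (L 0)"
    by (rule Re_le_three_Re_0_Harnack[OF holL _ r z])
  have "norm (E z) / m = exp (Re (L z))" using expRe[of z] z r by simp
  also have "\<dots> \<le> exp (3 * Re (L 0))" using \<open>Re (L z) \<le> 3 * Re (L 0)\<close> by simp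
  also have "\<dots> = exp (Re (L 0)) ^ 3" by (metis exp_of_nat_mult of_nat_numeral)
  also have "\<dots> = (norm (E 0) / m) ^ 3" using expRe[of 0] r by simp
  finally show ?thesis using m by (simp add: field_simps power2_eq_square power3_eq_cube)
qed

lemma logderiv_contour_integrable_circlepath:
  fixes G :: "complex \<Rightarrow> complex"
  assumes holG: "G holomorphic_on UNIV" and nz: "\<And>z. z \<in> sphere 0 r \<Longrightarrow> G z \<noteq> 0" and "0 \<le> r"
  shows "(\<lambda>z. deriv G z / G z) contour_integrable_on circlepath 0 r"
proof (rule contour_integrable_continuous_circlepath)
  have "deriv G holomorphic_on UNIV" using holG by (rule holomorphic_deriv) simp
  then show "continuous_on (path_image (circlepath 0 r)) (\<lambda>z. deriv G z / G z)"
    using nz \<open>0 \<le> r\<close> holG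
    by (intro continuous_intros holomorphic_on_imp_continuous_on) (auto intro: holomorphic_on_subset)
qed

lemma contour_integral_logderiv_circlepath_zorder:
  fixes G :: "complex \<Rightarrow> complex"
  assumes holG: "G holomorphic_on UNIV" and r: "0 < r" and nz: "\<And>z. z \<in> sphere 0 r \<Longrightarrow> G z \<noteq> 0"
    and nonconst: "\<not> G constant_on UNIV"
  shows "contour_integral (circlepath 0 r) (\<lambda>z. deriv G z / G z) =
      2 * pi * \<i> * (\<Sum>p\<in>{w\<in>ball 0 r. G w = 0}. of_int (zorder G p))"
proof -
  define S where "S = ball (0::complex) (r + 1)"
  define zs where "zs = {w\<in>S. G w = 0}"
  have "finite {z\<in>cball 0 (r + 1). G z = 0}"
    by (rule holomorphic_compact_finite_zeros[OF holG open_UNIV connected_UNIV compact_cball subset_UNIV nonconst])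
  then have fin: "finite zs" by (rule rev_finite_subset) (auto simp: zs_def S_def)
  have outside: "winding_number (circlepath 0 r) z = 0" if "z \<notin> cball 0 r" for z
    using that r by (intro winding_number_zero_outside[of _ "cball 0 r"]) auto
  have img: "path_image (circlepath 0 r) \<subseteq> S - zs"
    using r nz by (auto simp: S_def zs_def)
  have "contour_integral (circlepath 0 r) (\<lambda>z. deriv G z * 1 / G z) =
       2 * pi * \<i> * (\<Sum>p\<in>zs. winding_number (circlepath 0 r) p * 1 * zorder G p)"
    unfolding zs_def
    by (rule argument_principle[of S G "{}" "\<lambda>_. 1" "circlepath 0 r", unfolded empty_iff simp_thms])
       (use fin img outside r holG in \<open>auto simp: S_def zs_def intro: holomorphic_on_subset\<close>)
  also have "(\<Sum>p\<in>zs. winding_number (circlepath 0 r) p * 1 * zorder G p)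
      = (\<Sum>p\<in>zs \<inter> ball 0 r. of_int (zorder G p))"
  proof -
    have "winding_number (circlepath 0 r) p * 1 * zorder G p =
        (if p \<in> ball 0 r then of_int (zorder G p) else 0)" if "p \<in> zs" for p
    proof -
      have "p \<notin> sphere 0 r" using that img by auto
      then show ?thesis using outside[of p] winding_number_circlepath[of p 0 r] by auto
    qed
    then show ?thesis using fin by (simp add: sum.inter_restrict)
  qed
  also have "zs \<inter> ball 0 r = {w\<in>ball 0 r. G w = 0}" using r by (auto simp: zs_def S_def)
  finally show ?thesis by simp
qed

lemma argument_principle_circlepath:
  fixes G :: "complex \<Rightarrow> complex"
  assumes holG: "G holomorphic_on UNIV" and r: "0 < r" and nz: "\<And>z. z \<in> sphere 0 r \<Longrightarrow> G z \<noteq> 0"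
  obtains N :: nat
  where "contour_integral (circlepath 0 r) (\<lambda>z. deriv G z / G z) = 2 * pi * \<i> * of_nat N"
    and "N = 0 \<longleftrightarrow> (\<forall>z\<in>ball 0 r. G z \<noteq> 0)"
proof (cases "G constant_on UNIV")
  case True
  then obtain c where "G = (\<lambda>_. c)" unfolding constant_on_def by blast
  moreover have "G r \<noteq> 0" using nz[of r] r by simp
  ultimately show ?thesis by (intro that[of 0]) auto
next
  case False
  define Z where "Z = {w\<in>ball 0 r. G w = 0}"
  define N where "N = (\<Sum>p\<in>Z. nat (zorder G p))"
  have "finite {z\<in>cball 0 r. G z = 0}"
    by (rule holomorphic_compact_finite_zeros[OF holG open_UNIV connected_UNIV compact_cball subset_UNIV False])
  then have finZ: "finite Z" by (rule rev_finite_subset) (auto simp: Z_def)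
  have "\<exists>w\<in>UNIV. G w \<noteq> 0" using nz[of r] r by (intro bexI[of _ "of_real r"]) auto
  then have pos: "0 < zorder G p" if "p \<in> Z" for p
    using zorder_exist_zero[OF holG open_UNIV connected_UNIV UNIV_I, of p] that by (auto simp: Z_def)
  have "of_nat N = (\<Sum>p\<in>Z. of_int (zorder G p) :: complex)"
    unfolding N_def of_nat_sum using pos by (intro sum.cong) (auto simp: of_nat_nat less_imp_le)
  then have "contour_integral (circlepath 0 r) (\<lambda>z. deriv G z / G z) = 2 * pi * \<i> * of_nat N"
    using contour_integral_logderiv_circlepath_zorder[OF holG r nz False] unfolding Z_def by simp
  moreover have "N = 0 \<longleftrightarrow> Z = {}"
    using pos by (force simp: N_def sum_eq_0_iff[OF finZ])
  moreover have "Z = {} \<longleftrightarrow> (\<forall>z\<in>ball 0 r. G z \<noteq> 0)"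
    unfolding Z_def by blast
  ultimately show ?thesis by (intro that[of N]) simp_all
qed

lemma holomorphic_divide_zero_circlepath:
  fixes G :: "complex \<Rightarrow> complex"
  assumes holG: "G holomorphic_on UNIV" and a: "a \<in> ball 0 r" "G a = 0"
    and nz: "\<And>z. z \<in> sphere 0 r \<Longrightarrow> G z \<noteq> 0"
  obtains G1 where "G1 holomorphic_on UNIV" and "\<And>z. G z = (z - a) * G1 z"
    and "\<And>z. z \<in> sphere 0 r \<Longrightarrow> G1 z \<noteq> 0"
    and "contour_integral (circlepath 0 r) (\<lambda>z. deriv G z / G z)
       = contour_integral (circlepath 0 r) (\<lambda>z. deriv G1 z / G1 z) + 2 * pi * \<i>"
proof
  define G1 where "G1 z = (if z = a then deriv G a else (G z - G a) / (z - a))" for z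
  have "norm a < r" using a(1) by simp
  then have r: "0 \<le> r" using norm_ge_zero[of a] by linarith
  show holG1: "G1 holomorphic_on UNIV" unfolding G1_def by (rule pole_lemma[OF holG]) simp
  show Geq: "G z = (z - a) * G1 z" for z unfolding G1_def using a(2) by auto
  show nz1: "G1 z \<noteq> 0" if "z \<in> sphere 0 r" for z using nz[OF that] Geq[of z] by auto
  have dG: "deriv G z = G1 z + (z - a) * deriv G1 z" for z
  proof -
    have "G1 field_differentiable at z" using holG1 holomorphic_on_imp_differentiable_at by blast
    then have "deriv (\<lambda>z. (z - a) * G1 z) z = (z - a) * deriv G1 z + deriv (\<lambda>z. z - a) z * G1 z"
      by (intro deriv_mult) (auto intro!: derivative_intros)
    moreover have "deriv (\<lambda>z. z - a) z = 1" by (auto intro!: DERIV_imp_deriv derivative_eq_intros)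
    ultimately show ?thesis unfolding Geq[abs_def] by simp
  qed
  have za: "z \<noteq> a" if "z \<in> sphere 0 r" for z using that a(1) by auto
  have int1: "(\<lambda>z. deriv G1 z / G1 z) contour_integrable_on circlepath 0 r"
    using logderiv_contour_integrable_circlepath[OF holG1 nz1 r] .
  have int2: "(\<lambda>z. 1 / (z - a)) contour_integrable_on circlepath 0 r"
    using za r by (intro contour_integrable_continuous_circlepath continuous_intros) auto
  have "winding_number (circlepath 0 r) a = 1" using a(1) by (intro winding_number_circlepath) auto
  moreover have "winding_number (circlepath 0 r) a =
      1 / (2 * pi * \<i>) * contour_integral (circlepath 0 r) (\<lambda>w. 1 / (w - a))"
    using a(1) by (intro winding_number_valid_path) auto
  ultimately have "contour_integral (circlepath 0 r) (\<lambda>w. 1 / (w - a)) = 2 * pi * \<i>"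
    by (simp add: field_simps)
  moreover have "contour_integral (circlepath 0 r) (\<lambda>z. deriv G z / G z) =
        contour_integral (circlepath 0 r) (\<lambda>z. deriv G1 z / G1 z + 1 / (z - a))"
    using r nz1 za by (intro contour_integral_eq) (simp add: dG Geq field_simps)
  ultimately show "contour_integral (circlepath 0 r) (\<lambda>z. deriv G z / G z)
       = contour_integral (circlepath 0 r) (\<lambda>z. deriv G1 z / G1 z) + 2 * pi * \<i>"
    using contour_integral_add[OF int1 int2] by simp
qed

lemma holomorphic_factor_zeros_circlepath:
  fixes G :: "complex \<Rightarrow> complex"
  assumes "G holomorphic_on UNIV" and "0 < r" and "\<And>z. z \<in> sphere 0 r \<Longrightarrow> G z \<noteq> 0"
    and "contour_integral (circlepath 0 r) (\<lambda>z. deriv G z / G z) = 2 * pi * \<i> * of_nat N"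
  shows "\<exists>as E. length as = N \<and> (\<forall>a\<in>set as. norm a < r \<and> G a = 0) \<and> E holomorphic_on UNIV
     \<and> (\<forall>z\<in>cball 0 r. E z \<noteq> 0) \<and> (\<forall>z. G z = (\<Prod>a\<leftarrow>as. z - a) * E z)"
  using assms
proof (induction N arbitrary: G)
  case 0
  obtain N where "contour_integral (circlepath 0 r) (\<lambda>z. deriv G z / G z) = 2 * pi * \<i> * of_nat N"
    and "N = 0 \<longleftrightarrow> (\<forall>z\<in>ball 0 r. G z \<noteq> 0)"
    by (rule argument_principle_circlepath[OF "0.prems"(1-3)])
  with "0.prems" have "\<forall>z\<in>cball 0 r. G z \<noteq> 0" by (auto simp: less_le)
  then show ?case using "0.prems"(1) by (intro exI[of _ "[]"] exI[of _ G]) auto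
next
  case (Suc N)
  note holG = Suc.prems(1) and r = Suc.prems(2) and nz = Suc.prems(3)
  obtain N' where N': "contour_integral (circlepath 0 r) (\<lambda>z. deriv G z / G z) = 2 * pi * \<i> * of_nat N'"
    and "N' = 0 \<longleftrightarrow> (\<forall>z\<in>ball 0 r. G z \<noteq> 0)"
    by (rule argument_principle_circlepath[OF holG r nz])
  moreover have "of_nat N' = (of_nat (Suc N) :: complex)" using N' Suc.prems(4) by simp
  then have "N' = Suc N" using of_nat_eq_iff by blast
  ultimately obtain a where a: "a \<in> ball 0 r" "G a = 0" by auto
  obtain G1 where G1: "G1 holomorphic_on UNIV" "\<And>z. G z = (z - a) * G1 z"
    "\<And>z. z \<in> sphere 0 r \<Longrightarrow> G1 z \<noteq> 0"
    and integral: "contour_integral (circlepath 0 r) (\<lambda>z. deriv G z / G z)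
       = contour_integral (circlepath 0 r) (\<lambda>z. deriv G1 z / G1 z) + 2 * pi * \<i>"
    using holomorphic_divide_zero_circlepath[OF holG a nz] by blast
  have "contour_integral (circlepath 0 r) (\<lambda>z. deriv G1 z / G1 z) = 2 * pi * \<i> * of_nat N"
    using integral Suc.prems(4) by (simp add: algebra_simps)
  then obtain as E where IH: "length as = N" "\<forall>a\<in>set as. norm a < r \<and> G1 a = 0" "E holomorphic_on UNIV"
     "\<forall>z\<in>cball 0 r. E z \<noteq> 0" "\<forall>z. G1 z = (\<Prod>a\<leftarrow>as. z - a) * E z"
    using Suc.IH[OF G1(1) r G1(3)] by blast
  show ?case
  proof (intro exI[of _ "a # as"] exI[of _ E] conjI)
    show "\<forall>b\<in>set (a # as). norm b < r \<and> G b = 0" using IH(2) a G1(2) by auto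
    show "\<forall>z. G z = (\<Prod>a\<leftarrow>a # as. z - a) * E z" using IH(5) G1(2) by (simp add: mult.assoc)
  qed (use IH in auto)
qed

text \<open>By the minimum modulus principle \<open>E\<close> stays above \<open>\<mu> / (2r)^K\<close> on the whole disc, so Harnack's
  inequality applies to it.\<close>
lemma norm_bound_half_disc_factored:
  fixes G E :: "complex \<Rightarrow> complex"
  assumes holE: "E holomorphic_on UNIV" and r: "0 < r" and mu: "0 < \<mu>"
    and as: "\<forall>a\<in>set as. norm a \<le> r" and Enz: "\<forall>z\<in>cball 0 r. E z \<noteq> 0"
    and Geq: "\<forall>z. G z = (\<Prod>a\<leftarrow>as. z - a) * E z"
    and sphere: "\<And>z. z \<in> sphere 0 r \<Longrightarrow> \<mu> \<le> norm (G z)"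
    and z: "norm z \<le> r / 2"
  shows "norm (G z) \<le> 4 * (2 * r) ^ (3 * length as) * norm (E 0) ^ 3 / \<mu>\<^sup>2"
proof -
  define K where "K = length as"
  define m where "m = \<mu> / (2 * r) ^ K"
  have m: "0 < m" unfolding m_def using mu r by simp
  have prod: "norm (\<Prod>a\<leftarrow>as. w - a) \<le> (2 * r) ^ K" if "norm w \<le> r" for w
    unfolding K_def
  proof (rule norm_prod_list_diff_le)
    fix a assume "a \<in> set as"
    then show "norm (w - a) \<le> 2 * r" using as norm_triangle_ineq4[of w a] that by fastforce
  qed
  have "m \<le> norm (E w)" if "w \<in> sphere 0 r" for w
  proof -
    have "\<mu> \<le> norm (\<Prod>a\<leftarrow>as. w - a) * norm (E w)" using sphere[OF that] Geq by (simp add: norm_mult)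
    also have "\<dots> \<le> (2 * r) ^ K * norm (E w)" using prod[of w] that by (intro mult_right_mono) auto
    finally show ?thesis unfolding m_def using r by (simp add: divide_simps mult.commute)
  qed
  then have disc: "m \<le> norm (E w)" if "w \<in> cball 0 r" for w
    using minimum_modulus_cball[OF holomorphic_on_subset[OF holE] _ r m _ that] Enz by auto
  have "m / 2 < norm (E w)" if "w \<in> ball 0 r" for w
    using disc[of w] that m by auto
  then have "norm (E z) \<le> norm (E 0) ^ 3 / (m / 2)\<^sup>2"
    using m by (intro zero_free_norm_le_Harnack[OF holomorphic_on_subset[OF holE] r _ _ z]) auto
  then have "norm (\<Prod>a\<leftarrow>as. z - a) * norm (E z) \<le> (2 * r) ^ K * (norm (E 0) ^ 3 / (m / 2)\<^sup>2)"
    using prod[of z] z r by (intro mult_mono) auto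
  then have "norm (G z) \<le> (2 * r) ^ K * (norm (E 0) ^ 3 / (m / 2)\<^sup>2)"
    using Geq by (simp add: norm_mult)
  also have "\<dots> = 4 * (2 * r) ^ (3 * K) * norm (E 0) ^ 3 / \<mu>\<^sup>2"
    unfolding m_def using r mu
    by (simp add: field_simps power_mult_distrib power_mult[symmetric] power_add[symmetric])
  finally show ?thesis unfolding K_def .
qed

lemma bounded_below_near_infinity_imp_is_polynomial_fun:
  fixes G :: "complex \<Rightarrow> complex"
  assumes holG: "G holomorphic_on UNIV" and eps: "0 < \<epsilon>"
    and lower: "\<And>z. R \<le> norm z \<Longrightarrow> \<epsilon> \<le> norm (G z)"
  shows "is_polynomial_fun G"
proof -
  define R' where "R' = max R 1"
  have R': "0 < R'" "1 \<le> R'" unfolding R'_def by auto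
  have nz: "G z \<noteq> 0" if "R' \<le> norm z" for z using lower[of z] that eps unfolding R'_def by auto
  have sphere: "G z \<noteq> 0" if "z \<in> sphere 0 R'" for z using nz that by simp
  obtain N where "contour_integral (circlepath 0 R') (\<lambda>z. deriv G z / G z) = 2 * pi * \<i> * of_nat N"
    by (rule argument_principle_circlepath[OF holG R'(1) sphere])
  from holomorphic_factor_zeros_circlepath[OF holG R'(1) sphere this]
  obtain as E where fac: "\<forall>a\<in>set as. norm a < R'" "E holomorphic_on UNIV"
     "\<forall>z\<in>cball 0 R'. E z \<noteq> 0" "\<forall>z. G z = (\<Prod>a\<leftarrow>as. z - a) * E z"
    by blast
  have Enz: "E z \<noteq> 0" for z
    using fac(3,4) nz[of z] by (cases "norm z \<le> R'") auto
  have "norm (G z) \<le> (4 * 4 ^ (3 * length as) * norm (E 0) ^ 3 / \<epsilon>\<^sup>2) * norm z ^ (3 * length as)"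
    if z: "R' \<le> norm z" for z
  proof -
    define r where "r = 2 * norm z"
    have "norm (G z) \<le> 4 * (2 * r) ^ (3 * length as) * norm (E 0) ^ 3 / \<epsilon>\<^sup>2"
    proof (rule norm_bound_half_disc_factored[OF fac(2) _ eps _ _ fac(4)])
      show "0 < r" "\<forall>a\<in>set as. norm a \<le> r" "\<forall>z\<in>cball 0 r. E z \<noteq> 0" "norm z \<le> r / 2"
        using fac(1) z R' Enz unfolding r_def by force+
      show "\<epsilon> \<le> norm (G w)" if "w \<in> sphere 0 r" for w
        using lower[of w] that z R' unfolding r_def R'_def by auto
    qed
    then show ?thesis unfolding r_def by (simp add: power_mult_distrib field_simps)
  qed
  then show ?thesis by (rule polynomial_growth_imp_is_polynomial_fun[OF holG])
qed

lemma norm_bound_half_disc_zero_count: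
  fixes G :: "complex \<Rightarrow> complex"
  assumes holG: "G holomorphic_on UNIV" and r: "0 < r" and mu: "0 < \<mu>" and rho: "0 < \<rho>"
    and sphere: "\<And>z. z \<in> sphere 0 r \<Longrightarrow> \<mu> \<le> norm (G z)"
    and count: "contour_integral (circlepath 0 r) (\<lambda>z. deriv G z / G z) = 2 * pi * \<i> * of_nat K"
    and zeros: "\<And>a. a \<in> ball 0 r \<Longrightarrow> G a = 0 \<Longrightarrow> \<rho> \<le> norm a"
    and z: "norm z \<le> r / 2"
  shows "norm (G z) \<le> 4 * (2 * r) ^ (3 * K) * norm (G 0) ^ 3 / (\<rho> ^ (3 * K) * \<mu>\<^sup>2)"
proof -
  have nz: "G z \<noteq> 0" if "z \<in> sphere 0 r" for z using sphere[OF that] mu by auto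
  obtain as E where fac: "length as = K" "\<forall>a\<in>set as. norm a < r \<and> G a = 0" "E holomorphic_on UNIV"
    "\<forall>z\<in>cball 0 r. E z \<noteq> 0" "\<forall>z. G z = (\<Prod>a\<leftarrow>as. z - a) * E z"
    using holomorphic_factor_zeros_circlepath[OF holG r nz count] by blast
  have "\<rho> ^ K \<le> norm (\<Prod>a\<leftarrow>as. 0 - a)"
    unfolding fac(1)[symmetric] by (rule norm_prod_list_diff_ge) (use fac(2) zeros rho in auto)
  then have "\<rho> ^ K * norm (E 0) \<le> norm (G 0)"
    using fac(5) by (simp add: norm_mult mult_right_mono)
  then have E0: "norm (E 0) \<le> norm (G 0) / \<rho> ^ K"
    using rho by (simp add: field_simps)
  have "norm (G z) \<le> 4 * (2 * r) ^ (3 * K) * norm (E 0) ^ 3 / \<mu>\<^sup>2"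
    using norm_bound_half_disc_factored[OF fac(3) r mu _ fac(4) fac(5) sphere z] fac(1,2) by fastforce
  also have "\<dots> \<le> 4 * (2 * r) ^ (3 * K) * (norm (G 0) / \<rho> ^ K) ^ 3 / \<mu>\<^sup>2"
    using E0 r by (intro divide_right_mono mult_left_mono power_mono) auto
  also have "\<dots> = 4 * (2 * r) ^ (3 * K) * norm (G 0) ^ 3 / (\<rho> ^ (3 * K) * \<mu>\<^sup>2)"
    by (simp add: power_divide power_mult[symmetric] mult.commute)
  finally show ?thesis .
qed

lemma winding_number_circlepath_image_eq:
  fixes F :: "complex \<Rightarrow> complex"
  assumes cont: "continuous_on {z. R \<le> norm z} F" and nz: "\<And>z. R \<le> norm z \<Longrightarrow> F z \<noteq> 0"
    and "R \<le> r"
  shows "winding_number (F \<circ> circlepath 0 r) 0 = winding_number (F \<circ> circlepath 0 R) 0"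
proof -
  define A where "A = {z::complex. R \<le> norm z}"
  have "homotopic_loops A (circlepath 0 R) (circlepath 0 r)"
  proof (rule homotopic_loops_linear)
    fix t :: real
    define e where "e = exp (2 * of_real pi * \<i> * of_real t)"
    have "norm e = 1" unfolding e_def by (simp add: norm_exp_eq_Re)
    have "circlepath 0 R t = of_real R * e" "circlepath 0 r t = of_real r * e"
      unfolding e_def circlepath by auto
    then show "closed_segment (circlepath 0 R t) (circlepath 0 r t) \<subseteq> A"
    proof (clarsimp simp: closed_segment_def)
      fix u :: real assume u: "0 \<le> u" "u \<le> 1"
      have "R \<le> (1 - u) * R + u * r" using mult_left_mono[OF \<open>R \<le> r\<close> u(1)] by (simp add: algebra_simps)
      also have "\<dots> \<le> norm (of_real ((1 - u) * R + u * r) * e)"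
        unfolding norm_mult norm_of_real \<open>norm e = 1\<close> by simp
      also have "of_real ((1 - u) * R + u * r) * e = (1 - u) *\<^sub>R (of_real R * e) + u *\<^sub>R (of_real r * e)"
        by (simp add: scaleR_conv_of_real algebra_simps)
      finally show "(1 - u) *\<^sub>R (of_real R * e) + u *\<^sub>R (of_real r * e) \<in> A" unfolding A_def by simp
    qed
  qed auto
  then have "homotopic_loops (-{0}) (F \<circ> circlepath 0 R) (F \<circ> circlepath 0 r)"
    by (rule homotopic_loops_continuous_image) (use cont nz in \<open>auto simp: A_def\<close>)
  then show ?thesis using winding_number_homotopic_loops by metis
qed

lemma contour_integral_logderiv_eq_winding_number:
  fixes \<psi> :: "complex \<Rightarrow> complex"
  assumes hol: "\<psi> holomorphic_on S" and "open S" and "sphere 0 r \<subseteq> S" and r: "0 < r"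
    and nz: "\<And>z. z \<in> sphere 0 r \<Longrightarrow> \<psi> z \<noteq> 0"
  shows "contour_integral (circlepath 0 r) (\<lambda>w. deriv \<psi> w / \<psi> w)
       = 2 * pi * \<i> * winding_number (\<psi> \<circ> circlepath 0 r) 0"
proof -
  have img: "path_image (circlepath 0 r) \<subseteq> S" using assms by simp
  have "valid_path (\<psi> \<circ> circlepath 0 r)"
    by (rule valid_path_compose_holomorphic[OF _ hol \<open>open S\<close> img]) simp
  moreover have "0 \<notin> path_image (\<psi> \<circ> circlepath 0 r)"
    using nz r by (auto simp: path_image_compose)
  ultimately have "winding_number (\<psi> \<circ> circlepath 0 r) 0
      = 1 / (2 * pi * \<i>) * contour_integral (\<psi> \<circ> circlepath 0 r) (\<lambda>w. 1 / (w - 0))"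
    by (rule winding_number_valid_path)
  also have "contour_integral (\<psi> \<circ> circlepath 0 r) (\<lambda>w. 1 / (w - 0))
      = contour_integral (circlepath 0 r) (\<lambda>w. deriv \<psi> w * (1 / (\<psi> w - 0)))"
    using hol \<open>open S\<close> img by (intro contour_integral_comp_analyticW) (auto simp: analytic_on_open)
  finally show ?thesis by (simp add: field_simps comp_def)
qed

lemma winding_number_cnj_loop:
  assumes "path \<gamma>" and "pathfinish \<gamma> = pathstart \<gamma>" and "0 \<notin> path_image \<gamma>"
  shows "winding_number (cnj \<circ> \<gamma>) 0 = - winding_number \<gamma> 0"
proof -
  obtain k where "winding_number \<gamma> 0 = of_int k"
    using integer_winding_number[OF assms] by (metis Ints_cases)
  then show ?thesis using winding_number_cnj[OF assms(1,3)] by simp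
qed

lemma contour_integral_logderiv_div_power:
  fixes G :: "complex \<Rightarrow> complex"
  assumes holG: "G holomorphic_on UNIV" and r: "0 < r" and nz: "\<And>z. z \<in> sphere 0 r \<Longrightarrow> G z \<noteq> 0"
  shows "contour_integral (circlepath 0 r) (\<lambda>w. deriv (\<lambda>z. G z / z ^ n) w / (G w / w ^ n))
       = contour_integral (circlepath 0 r) (\<lambda>w. deriv G w / G w) - 2 * pi * \<i> * of_nat n"
proof -
  define c where "c = circlepath (0::complex) r"
  have "deriv (\<lambda>z. G z / z ^ n) w / (G w / w ^ n) = deriv G w / G w - of_nat n * (1 / w)"
    if w: "w \<in> sphere 0 r" for w
  proof -
    have w0: "w \<noteq> 0" using w r by auto
    have "((\<lambda>z. G z / z ^ n) has_field_derivative
        (deriv G w * w ^ n - G w * (of_nat n * w ^ (n - 1))) / (w ^ n * w ^ n)) (at w)"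
      using w0 holG
      by (intro derivative_eq_intros DERIV_power[OF DERIV_ident, simplified]) (auto intro: holomorphic_derivI)
    then have "deriv (\<lambda>z. G z / z ^ n) w = (deriv G w * w ^ n - G w * (of_nat n * w ^ (n - 1))) / (w ^ n * w ^ n)"
      by (rule DERIV_imp_deriv)
    also have "of_nat n * w ^ (n - 1) = of_nat n * w ^ n / w" using w0 by (cases n) simp_all
    finally have "deriv (\<lambda>z. G z / z ^ n) w = (deriv G w * w ^ n - G w * (of_nat n * w ^ n / w)) / (w ^ n * w ^ n)" .
    also have "\<dots> = (deriv G w - G w * of_nat n / w) / w ^ n"
      using w0 by (simp add: field_simps)
    finally show ?thesis using nz[OF w] w0 by (simp add: field_simps)
  qed
  then have "contour_integral c (\<lambda>w. deriv (\<lambda>z. G z / z ^ n) w / (G w / w ^ n))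
      = contour_integral c (\<lambda>w. deriv G w / G w - of_nat n * (1 / w))"
    using r unfolding c_def by (intro contour_integral_eq) simp
  also have "\<dots> = contour_integral c (\<lambda>w. deriv G w / G w) - of_nat n * contour_integral c (\<lambda>w. 1 / w)"
  proof -
    have int1: "(\<lambda>w. deriv G w / G w) contour_integrable_on c"
      unfolding c_def using logderiv_contour_integrable_circlepath[OF holG nz] r by simp
    have int2: "(\<lambda>w. 1 / w) contour_integrable_on c"
      unfolding c_def using r by (intro contour_integrable_continuous_circlepath continuous_intros) auto
    show ?thesis
      using contour_integral_diff[OF int1 contour_integrable_lmul[OF int2, of "of_nat n"]]
        contour_integral_lmul[OF int2, of "of_nat n"] by simp
  qed
  also have "contour_integral c (\<lambda>w. 1 / w) = 2 * pi * \<i>"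
    unfolding c_def using contour_integral_circlepath[OF r, of 0] by simp
  finally show ?thesis unfolding c_def by (simp add: algebra_simps)
qed

text \<open>On the circle \<open>norm z = r\<close> we have \<open>cnj z = r\<^sup>2 / z\<close>, so there \<open>z ^ degree p * cnj (poly p z + cnj (g z))\<close>
  agrees with the following entire function.\<close>
definition reflected_fun :: "complex poly \<Rightarrow> (complex \<Rightarrow> complex) \<Rightarrow> real \<Rightarrow> complex \<Rightarrow> complex" where
  "reflected_fun p g r z = z ^ degree p * g z
     + (\<Sum>k\<le>degree p. cnj (coeff p k) * of_real r ^ (2 * k) * z ^ (degree p - k))"

lemma reflected_fun_sphere:
  assumes "norm z = r"
  shows "reflected_fun p g r z = z ^ degree p * cnj (poly p z + cnj (g z))"
proof -
  define n where "n = degree p"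
  have zz: "z * cnj z = of_real r ^ 2" using assms complex_norm_square[of z] by simp
  have "z ^ n * cnj (poly p z) = (\<Sum>k\<le>n. z ^ n * (cnj (coeff p k) * cnj z ^ k))"
    unfolding poly_altdef n_def by (simp add: cnj_sum sum_distrib_left)
  also have "\<dots> = (\<Sum>k\<le>n. cnj (coeff p k) * of_real r ^ (2 * k) * z ^ (n - k))"
  proof (rule sum.cong[OF refl])
    fix k assume "k \<in> {..n}"
    then have "z ^ n * cnj z ^ k = z ^ (n - k) * (z * cnj z) ^ k"
      by (simp add: power_mult_distrib power_add[symmetric])
    also have "\<dots> = z ^ (n - k) * of_real r ^ (2 * k)" unfolding zz by (simp add: power_mult)
    finally show "z ^ n * (cnj (coeff p k) * cnj z ^ k) = cnj (coeff p k) * of_real r ^ (2 * k) * z ^ (n - k)"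
      by (simp add: algebra_simps)
  qed
  finally show ?thesis unfolding reflected_fun_def n_def[symmetric] by (simp add: algebra_simps)
qed

lemma norm_reflected_fun_sphere:
  assumes "norm z = r"
  shows "norm (reflected_fun p g r z) = r ^ degree p * norm (poly p z + cnj (g z))"
proof -
  have "norm (reflected_fun p g r z) = norm z ^ degree p * norm (cnj (poly p z + cnj (g z)))"
    unfolding reflected_fun_sphere[OF assms] by (simp only: norm_mult norm_power)
  then show ?thesis using assms by (simp only: complex_mod_cnj)
qed

lemma holomorphic_reflected_fun:
  assumes "g holomorphic_on UNIV"
  shows "reflected_fun p g r holomorphic_on UNIV"
  unfolding reflected_fun_def[abs_def] by (intro holomorphic_intros assms)

lemma reflected_fun_0:
  assumes "0 < degree p"
  shows "reflected_fun p g r 0 = cnj (lead_coeff p) * of_real r ^ (2 * degree p)"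
proof -
  have "(\<Sum>k\<le>degree p. cnj (coeff p k) * of_real r ^ (2 * k) * (0::complex) ^ (degree p - k))
      = (\<Sum>k\<le>degree p. if k = degree p then cnj (coeff p k) * of_real r ^ (2 * k) else 0)"
    by (rule sum.cong) auto
  then show ?thesis using assms unfolding reflected_fun_def by simp
qed

lemma norm_reflected_fun_minus_lead_le:
  assumes n: "0 < degree p" and r: "1 \<le> r" and a: "norm a \<le> 1" and M: "norm (g a) \<le> M"
  shows "norm (reflected_fun p g r a - cnj (lead_coeff p) * of_real r ^ (2 * degree p))
       \<le> norm a * (M + (\<Sum>k<degree p. norm (coeff p k))) * r ^ (2 * degree p)"
proof -
  define n where "n = degree p"
  have "reflected_fun p g r a - cnj (lead_coeff p) * of_real r ^ (2 * n)
      = a ^ n * g a + (\<Sum>k<n. cnj (coeff p k) * of_real r ^ (2 * k) * a ^ (n - k))"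
    unfolding reflected_fun_def n_def by (simp add: lessThan_Suc_atMost[symmetric])
  moreover have "norm (a ^ n * g a) \<le> norm a * M * r ^ (2 * n)"
  proof -
    have "norm a ^ n \<le> norm a" using a n unfolding n_def by (simp add: power_decreasing[of 1, simplified])
    then have "norm (a ^ n * g a) \<le> norm a * M"
      using M by (simp add: norm_mult norm_power mult_mono)
    also have "\<dots> \<le> norm a * M * r ^ (2 * n)"
      using mult_left_mono[OF one_le_power[OF r, of "2 * n"], of "norm a * M"] order_trans[OF norm_ge_zero M]
      by simp
    finally show ?thesis .
  qed
  moreover have "norm (\<Sum>k<n. cnj (coeff p k) * of_real r ^ (2 * k) * a ^ (n - k))
      \<le> norm a * (\<Sum>k<n. norm (coeff p k)) * r ^ (2 * n)"
  proof -
    have "norm (cnj (coeff p k) * of_real r ^ (2 * k) * a ^ (n - k))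
        \<le> norm a * (norm (coeff p k) * r ^ (2 * n))" if "k < n" for k
    proof -
      have "norm a ^ (n - k) \<le> norm a" using that a by (simp add: power_decreasing[of 1, simplified])
      moreover have "r ^ (2 * k) \<le> r ^ (2 * n)" using r that by (intro power_increasing) auto
      ultimately have "norm a ^ (n - k) * r ^ (2 * k) \<le> norm a * r ^ (2 * n)"
        by (intro mult_mono) auto
      then have "norm (coeff p k) * (norm a ^ (n - k) * r ^ (2 * k)) \<le> norm (coeff p k) * (norm a * r ^ (2 * n))"
        by (rule mult_left_mono) simp
      then show ?thesis using r by (simp add: norm_mult norm_power mult_ac)
    qed
    then have "norm (\<Sum>k<n. cnj (coeff p k) * of_real r ^ (2 * k) * a ^ (n - k))
        \<le> (\<Sum>k<n. norm a * (norm (coeff p k) * r ^ (2 * n)))"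
      by (intro order_trans[OF norm_sum] sum_mono) auto
    also have "\<dots> = norm a * (\<Sum>k<n. norm (coeff p k)) * r ^ (2 * n)"
      by (simp add: sum_distrib_left sum_distrib_right mult_ac)
    finally show ?thesis .
  qed
  ultimately show ?thesis unfolding n_def[symmetric]
    by (smt (verit, best) distrib_left distrib_right norm_triangle_ineq)
qed

lemma reflected_fun_zeros_bounded_away:
  assumes holg: "g holomorphic_on UNIV" and n: "0 < degree p"
  obtains \<rho> where "0 < \<rho>" and "\<And>r a. 1 \<le> r \<Longrightarrow> reflected_fun p g r a = 0 \<Longrightarrow> \<rho> \<le> norm a"
proof -
  have "compact (g ` cball 0 1)"
    by (intro compact_continuous_image holomorphic_on_imp_continuous_on holomorphic_on_subset[OF holg]) auto
  then obtain M where M: "0 < M" "\<forall>w\<in>g ` cball 0 1. norm w \<le> M"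
    using compact_imp_bounded bounded_pos by blast
  define B where "B = M + (\<Sum>k<degree p. norm (coeff p k)) + 1"
  have B: "0 < B" unfolding B_def using M by (simp add: sum_nonneg add_pos_nonneg)
  have lead: "lead_coeff p \<noteq> 0" using n by auto
  show ?thesis
  proof (rule that[of "min 1 (norm (lead_coeff p) / B)"])
    show "0 < min 1 (norm (lead_coeff p) / B)" using lead B by simp
    fix r a assume r: "1 \<le> r" and zero: "reflected_fun p g r a = 0"
    show "min 1 (norm (lead_coeff p) / B) \<le> norm a"
    proof (rule ccontr)
      assume "\<not> ?thesis"
      then have a1: "norm a \<le> 1" and "norm a < norm (lead_coeff p) / B" by auto
      then have aB: "norm a * B < norm (lead_coeff p)" using B by (simp add: pos_less_divide_eq)
      have "norm (lead_coeff p) * r ^ (2 * degree p)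
          \<le> norm a * (M + (\<Sum>k<degree p. norm (coeff p k))) * r ^ (2 * degree p)"
        using norm_reflected_fun_minus_lead_le[OF n r a1, of g M] M(2) a1 zero r by (simp add: norm_mult norm_power)
      also have "\<dots> \<le> norm a * B * r ^ (2 * degree p)"
        using r unfolding B_def by (intro mult_right_mono mult_left_mono) auto
      finally have "norm (lead_coeff p) \<le> norm a * B" using r by simp
      with aB show False by simp
    qed
  qed
qed

lemma contour_integral_logderiv_reflected_fun:
  fixes g :: "complex \<Rightarrow> complex"
  assumes holg: "g holomorphic_on UNIV" and r: "0 < r"
    and nz: "\<And>z. z \<in> sphere 0 r \<Longrightarrow> poly p z + cnj (g z) \<noteq> 0"
  shows "contour_integral (circlepath 0 r) (\<lambda>z. deriv (reflected_fun p g r) z / reflected_fun p g r z)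
       = 2 * pi * \<i> * (of_nat (degree p) - winding_number ((\<lambda>z. poly p z + cnj (g z)) \<circ> circlepath 0 r) 0)"
proof -
  define F where "F z = poly p z + cnj (g z)" for z
  define G where "G = reflected_fun p g r"
  define \<psi> where "\<psi> z = G z / z ^ degree p" for z
  define c where "c = circlepath (0::complex) r"
  have holG: "G holomorphic_on UNIV" unfolding G_def by (rule holomorphic_reflected_fun[OF holg])
  have \<psi>F: "\<psi> z = cnj (F z)" if "z \<in> sphere 0 r" for z
    using reflected_fun_sphere[of z r p g] that r unfolding \<psi>_def G_def F_def by auto
  have \<psi>nz: "\<psi> z \<noteq> 0" if "z \<in> sphere 0 r" for z
    using \<psi>F[OF that] nz[OF that] by (metis complex_cnj_zero_iff F_def)
  then have Gnz: "G z \<noteq> 0" if "z \<in> sphere 0 r" for z using that unfolding \<psi>_def by auto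
  have "contour_integral c (\<lambda>w. deriv G w / G w) - 2 * pi * \<i> * of_nat (degree p)
      = contour_integral c (\<lambda>w. deriv \<psi> w / \<psi> w)"
    using contour_integral_logderiv_div_power[OF holG r Gnz] unfolding c_def \<psi>_def[abs_def] by simp
  also have "\<dots> = 2 * pi * \<i> * winding_number (\<psi> \<circ> c) 0"
    unfolding c_def \<psi>_def[symmetric]
    by (rule contour_integral_logderiv_eq_winding_number[where S = "-{0}", OF _ _ _ r \<psi>nz])
      (use r in \<open>auto simp: \<psi>_def intro!: holomorphic_intros holomorphic_on_subset[OF holG]\<close>)
  also have "winding_number (\<psi> \<circ> c) 0 = - winding_number (F \<circ> c) 0"
  proof -
    have "circlepath 0 r t \<in> sphere 0 r" for t using r by (simp add: circlepath norm_mult norm_exp_eq_Re)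
    then have "\<psi> \<circ> c = cnj \<circ> (F \<circ> c)" using \<psi>F unfolding c_def by (simp add: fun_eq_iff)
    moreover have "path (F \<circ> c)" unfolding c_def F_def
      by (intro path_continuous_image continuous_intros holomorphic_on_imp_continuous_on
          holomorphic_on_subset[OF holg]) auto
    moreover have "pathfinish (F \<circ> c) = pathstart (F \<circ> c)"
      unfolding c_def by (simp add: pathfinish_compose pathstart_compose)
    moreover have "0 \<notin> path_image (F \<circ> c)"
      using nz r unfolding c_def F_def by (auto simp: path_image_compose)
    ultimately show ?thesis by (simp add: winding_number_cnj_loop)
  qed
  finally show ?thesis unfolding c_def G_def F_def[abs_def] by (simp add: algebra_simps)
qed

lemma norm_reflected_fun_diff_le:
  assumes r: "1 \<le> r" and z: "norm z \<le> r"
  shows "norm (reflected_fun p g r z - z ^ degree p * g z) \<le> (\<Sum>k\<le>degree p. norm (coeff p k)) * r ^ (2 * degree p)"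
proof -
  define n where "n = degree p"
  have "norm (cnj (coeff p k) * of_real r ^ (2 * k) * z ^ (n - k)) \<le> norm (coeff p k) * r ^ (2 * n)"
    if "k \<le> n" for k
  proof -
    have "norm z ^ (n - k) \<le> r ^ (n - k)" using z by (simp add: power_mono)
    then have "r ^ (2 * k) * norm z ^ (n - k) \<le> r ^ (2 * k) * r ^ (n - k)"
      using r by (simp add: mult_left_mono)
    also have "\<dots> \<le> r ^ (2 * n)"
      using r that by (simp add: power_add[symmetric] power_increasing)
    finally show ?thesis
      using r by (simp add: norm_mult norm_power mult.assoc mult_left_mono)
  qed
  then have "norm (\<Sum>k\<le>n. cnj (coeff p k) * of_real r ^ (2 * k) * z ^ (n - k))
      \<le> (\<Sum>k\<le>n. norm (coeff p k) * r ^ (2 * n))"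
    by (intro order_trans[OF norm_sum] sum_mono) auto
  then show ?thesis unfolding reflected_fun_def n_def by (simp add: sum_distrib_right)
qed

lemma reflected_fun_growth_imp_is_polynomial_fun:
  assumes holg: "g holomorphic_on UNIV" and R: "2 \<le> R"
    and bound: "\<And>r z. R \<le> r \<Longrightarrow> norm z \<le> r / 2 \<Longrightarrow> norm (reflected_fun p g r z) \<le> C * r ^ D"
  shows "is_polynomial_fun g"
proof -
  define n where "n = degree p"
  define S where "S = (\<Sum>k\<le>n. norm (coeff p k))"
  have "norm (reflected_fun p g R 0) \<le> C * R ^ D" using bound[of R 0] R by simp
  then have "0 \<le> C * R ^ D" using norm_ge_zero order_trans by blast
  moreover have "0 < R ^ D" using R by simp
  ultimately have C: "0 \<le> C" by (simp add: zero_le_mult_iff)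
  have S: "0 \<le> S" unfolding S_def by (simp add: sum_nonneg)
  have "norm (g z) \<le> ((C + S) * 2 ^ (D + 2 * n)) * norm z ^ (D + 2 * n)" if z: "R \<le> norm z" for z
  proof -
    define r where "r = 2 * norm z"
    have r: "R \<le> r" "1 \<le> r" "norm z \<le> r" and z1: "1 \<le> norm z" using z R unfolding r_def by auto
    have "norm (g z) \<le> norm (z ^ n * g z)"
      using z1 mult_right_mono[OF one_le_power[OF z1, of n] norm_ge_zero[of "g z"]]
      by (simp add: norm_mult norm_power)
    also have "\<dots> \<le> norm (reflected_fun p g r z) + norm (reflected_fun p g r z - z ^ n * g z)"
      using norm_triangle_sub[of "z ^ n * g z" "reflected_fun p g r z"] by (simp add: norm_minus_commute)
    also have "\<dots> \<le> C * r ^ D + S * r ^ (2 * n)"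
      using bound[OF r(1)] norm_reflected_fun_diff_le[OF r(2,3), of p g] unfolding r_def S_def n_def
      by (intro add_mono) simp_all
    also have "\<dots> \<le> C * r ^ (D + 2 * n) + S * r ^ (D + 2 * n)"
      using C S r by (simp add: add_mono mult_left_mono power_increasing)
    also have "\<dots> = ((C + S) * 2 ^ (D + 2 * n)) * norm z ^ (D + 2 * n)"
      unfolding r_def by (simp add: power_mult_distrib algebra_simps)
    finally show ?thesis .
  qed
  then show ?thesis by (rule polynomial_growth_imp_is_polynomial_fun[OF holg])
qed

text \<open>The integral counts the zeros inside the circle; it equals \<open>degree p\<close> minus the winding number
  of \<open>poly p + cnj \<circ> g\<close> along the circle, which does not change as the circle grows.\<close>
lemma reflected_fun_zero_count_const:
  fixes g :: "complex \<Rightarrow> complex"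
  assumes holg: "g holomorphic_on UNIV" and R: "0 < R"
    and nz: "\<And>z. R \<le> norm z \<Longrightarrow> poly p z + cnj (g z) \<noteq> 0"
  obtains K :: nat where "\<And>r. R \<le> r \<Longrightarrow>
    contour_integral (circlepath 0 r) (\<lambda>z. deriv (reflected_fun p g r) z / reflected_fun p g r z)
      = 2 * pi * \<i> * of_nat K"
proof -
  define F where "F z = poly p z + cnj (g z)" for z
  have integral: "contour_integral (circlepath 0 r) (\<lambda>z. deriv (reflected_fun p g r) z / reflected_fun p g r z)
      = 2 * pi * \<i> * (of_nat (degree p) - winding_number (F \<circ> circlepath 0 R) 0)" if r: "R \<le> r" for r
  proof -
    have "winding_number (F \<circ> circlepath 0 r) 0 = winding_number (F \<circ> circlepath 0 R) 0"
      using nz r unfolding F_def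
      by (intro winding_number_circlepath_image_eq continuous_intros continuous_on_poly
          holomorphic_on_imp_continuous_on holomorphic_on_subset[OF holg]) auto
    then show ?thesis
      using contour_integral_logderiv_reflected_fun[OF holg, of r p] nz r R unfolding F_def[abs_def] by simp
  qed
  have "norm (reflected_fun p g R z) \<noteq> 0" if "z \<in> sphere 0 R" for z
    using nz[of z] that R by (simp add: norm_reflected_fun_sphere)
  then have "reflected_fun p g R z \<noteq> 0" if "z \<in> sphere 0 R" for z using that by simp
  then obtain K where "contour_integral (circlepath 0 R) (\<lambda>z. deriv (reflected_fun p g R) z / reflected_fun p g R z)
      = 2 * pi * \<i> * of_nat K"
    using argument_principle_circlepath[OF holomorphic_reflected_fun[OF holg] R] by blast
  then show ?thesis using integral integral[OF order_refl] by (intro that[of K]) simp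
qed

lemma reflected_fun_polynomial_bound:
  fixes g :: "complex \<Rightarrow> complex"
  assumes holg: "g holomorphic_on UNIV" and n: "0 < degree p" and eps: "0 < \<epsilon>" and R: "1 \<le> R"
    and lower: "\<And>z. R \<le> norm z \<Longrightarrow> \<epsilon> \<le> norm (poly p z + cnj (g z))"
  obtains C D where "\<And>r z. R \<le> r \<Longrightarrow> norm z \<le> r / 2 \<Longrightarrow> norm (reflected_fun p g r z) \<le> C * r ^ D"
proof -
  define n where "n = degree p"
  define L where "L = norm (lead_coeff p)"
  have sphere: "\<epsilon> * r ^ n \<le> norm (reflected_fun p g r z)" if "R \<le> r" "z \<in> sphere 0 r" for r z
    using lower[of z] that R unfolding n_def by (simp add: norm_reflected_fun_sphere mult.commute mult_left_mono)
  obtain K where K: "\<And>r. R \<le> r \<Longrightarrow>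
      contour_integral (circlepath 0 r) (\<lambda>z. deriv (reflected_fun p g r) z / reflected_fun p g r z)
        = 2 * pi * \<i> * of_nat K"
    using reflected_fun_zero_count_const[OF holg, of R p] lower eps R by force
  obtain \<rho> where \<rho>: "0 < \<rho>" "\<And>r a. 1 \<le> r \<Longrightarrow> reflected_fun p g r a = 0 \<Longrightarrow> \<rho> \<le> norm a"
    using reflected_fun_zeros_bounded_away[OF holg n] by blast
  show ?thesis
  proof (rule that[of "4 * 2 ^ (3 * K) * L ^ 3 / (\<rho> ^ (3 * K) * \<epsilon>\<^sup>2)" "3 * K + 4 * n"])
    fix r :: real and z :: complex assume r: "R \<le> r" and z: "norm z \<le> r / 2"
    have "norm (reflected_fun p g r z)
        \<le> 4 * (2 * r) ^ (3 * K) * norm (reflected_fun p g r 0) ^ 3 / (\<rho> ^ (3 * K) * (\<epsilon> * r ^ n)\<^sup>2)"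
    proof (rule norm_bound_half_disc_zero_count[OF holomorphic_reflected_fun[OF holg] _ _ \<rho>(1) sphere[OF r] K[OF r] _ z])
      show "\<rho> \<le> norm a" if "a \<in> ball 0 r" and "reflected_fun p g r a = 0" for a
        using \<rho>(2)[OF _ that(2)] r R by simp
    qed (use r R eps in auto)
    also have "norm (reflected_fun p g r 0) = L * r ^ (2 * n)"
      using reflected_fun_0[OF n] r R unfolding L_def n_def by (simp add: norm_mult norm_power)
    also have "4 * (2 * r) ^ (3 * K) * (L * r ^ (2 * n)) ^ 3 / (\<rho> ^ (3 * K) * (\<epsilon> * r ^ n)\<^sup>2)
        = 4 * 2 ^ (3 * K) * L ^ 3 / (\<rho> ^ (3 * K) * \<epsilon>\<^sup>2) * r ^ (3 * K + 4 * n)"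
    proof -
      have "(r ^ (2 * n)) ^ 3 = r ^ (2 * n) * r ^ (4 * n)"
        by (simp add: power_mult[symmetric] power_add[symmetric])
      moreover have "(r ^ n)\<^sup>2 = r ^ (2 * n)" by (simp add: power_mult[symmetric] mult.commute)
      ultimately show ?thesis
        using r R \<rho>(1) eps by (simp add: power_mult_distrib power_add field_simps)
    qed
    finally show "norm (reflected_fun p g r z) \<le> 4 * 2 ^ (3 * K) * L ^ 3 / (\<rho> ^ (3 * K) * \<epsilon>\<^sup>2) * r ^ (3 * K + 4 * n)" .
  qed
qed

lemma poly_add_cnj_bounded_below_imp_is_polynomial_fun:
  fixes g :: "complex \<Rightarrow> complex"
  assumes holg: "g holomorphic_on UNIV" and eps: "0 < \<epsilon>"
    and lower: "\<And>z. R \<le> norm z \<Longrightarrow> \<epsilon> \<le> norm (poly p z + cnj (g z))"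
  shows "is_polynomial_fun g"
proof (cases "degree p = 0")
  case True
  then have "g z + cnj (coeff p 0) = cnj (poly p z + cnj (g z))" for z
    by (simp add: poly_altdef)
  then have "norm (g z + cnj (coeff p 0)) = norm (poly p z + cnj (g z))" for z
    by (metis complex_mod_cnj)
  then have "is_polynomial_fun (\<lambda>z. g z + cnj (coeff p 0))"
    using lower by (intro bounded_below_near_infinity_imp_is_polynomial_fun[OF _ eps]) (auto intro!: holomorphic_intros holg)
  then show ?thesis by (simp add: is_polynomial_fun_add_const_iff)
next
  case False
  define R' where "R' = max R 2"
  have lower': "\<epsilon> \<le> norm (poly p z + cnj (g z))" if "R' \<le> norm z" for z
    using lower that unfolding R'_def by simp
  have n: "0 < degree p" and two: "2 \<le> R'" and R': "1 \<le> R'" using False unfolding R'_def by auto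
  show ?thesis
  proof (rule reflected_fun_polynomial_bound[OF holg n eps R' lower'])
    fix C D assume "\<And>r z. R' \<le> r \<Longrightarrow> norm z \<le> r / 2 \<Longrightarrow> norm (reflected_fun p g r z) \<le> C * r ^ D"
    then show ?thesis by (rule reflected_fun_growth_imp_is_polynomial_fun[OF holg two])
  qed
qed

lemma not_in_cluster_set_infty_imp_bounded_below:
  fixes F :: "complex \<Rightarrow> complex"
  assumes "\<zeta> \<notin> cluster_set_infty F"
  obtains \<epsilon> R where "0 < \<epsilon>" and "\<And>z. R \<le> norm z \<Longrightarrow> \<epsilon> \<le> norm (F z - \<zeta>)"
proof (rule ccontr)
  assume none: "\<not> thesis"
  have "\<forall>n. \<exists>z. real n \<le> norm z \<and> norm (F z - \<zeta>) < inverse (real (Suc n))"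
  proof
    fix n
    have "\<not> (\<forall>z. real n \<le> norm z \<longrightarrow> inverse (real (Suc n)) \<le> norm (F z - \<zeta>))"
      using that[of "inverse (real (Suc n))" "real n"] none by auto
    then show "\<exists>z. real n \<le> norm z \<and> norm (F z - \<zeta>) < inverse (real (Suc n))"
      by (auto simp: not_le)
  qed
  then obtain zs where zs: "\<forall>n. real n \<le> norm (zs n) \<and> norm (F (zs n) - \<zeta>) < inverse (real (Suc n))"
    by (auto dest: choice)
  have "filterlim (\<lambda>n. norm (zs n)) at_top sequentially"
    by (rule filterlim_at_top_mono[OF filterlim_real_sequentially]) (use zs in auto)
  moreover have "(\<lambda>n. F (zs n) - \<zeta>) \<longlonglongrightarrow> 0"
  proof (rule Lim_null_comparison)
    show "\<forall>\<^sub>F n in sequentially. norm (F (zs n) - \<zeta>) \<le> inverse (real (Suc n))"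
      using zs by (intro always_eventually allI less_imp_le) blast
  qed (rule LIMSEQ_inverse_real_of_nat)
  then have "(\<lambda>n. F (zs n)) \<longlonglongrightarrow> \<zeta>" by (rule LIM_zero_cancel)
  ultimately have "\<zeta> \<in> cluster_set_infty F" unfolding cluster_set_infty_def by blast
  with assms show False by simp
qed

lemma cluster_set_infty_poly_add_cnj:
  fixes g :: "complex \<Rightarrow> complex"
  assumes holg: "g holomorphic_on UNIV" and "\<not> is_polynomial_fun g"
  shows "cluster_set_infty (\<lambda>z. poly p z + cnj (g z)) = UNIV"
proof (rule ccontr)
  assume "cluster_set_infty (\<lambda>z. poly p z + cnj (g z)) \<noteq> UNIV"
  then obtain \<zeta> \<epsilon> R where "0 < \<epsilon>" and "\<And>z. R \<le> norm z \<Longrightarrow> \<epsilon> \<le> norm (poly p z + cnj (g z) - \<zeta>)"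
    using not_in_cluster_set_infty_imp_bounded_below by blast
  then have "is_polynomial_fun g"
    by (intro poly_add_cnj_bounded_below_imp_is_polynomial_fun[OF holg, of \<epsilon> R "p - [:\<zeta>:]"])
      (simp_all add: algebra_simps)
  with assms(2) show False ..
qed

lemma cnj_in_cluster_set_infty_cnj_iff:
  "cnj \<zeta> \<in> cluster_set_infty (\<lambda>z. cnj (F z)) \<longleftrightarrow> \<zeta> \<in> cluster_set_infty F"
proof -
  have "(\<lambda>n. cnj (F (zs n))) \<longlonglongrightarrow> cnj \<zeta> \<longleftrightarrow> (\<lambda>n. F (zs n)) \<longlonglongrightarrow> \<zeta>" for zs :: "nat \<Rightarrow> complex"
    using tendsto_cnj[of "\<lambda>n. cnj (F (zs n))" "cnj \<zeta>"] tendsto_cnj[of "\<lambda>n. F (zs n)" \<zeta>] by auto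
  then show ?thesis unfolding cluster_set_infty_def by simp
qed

theorem corollary5p13:
  fixes h g :: "complex \<Rightarrow> complex"
  assumes "h holomorphic_on UNIV" and "g holomorphic_on UNIV"
  assumes "interior ((\<lambda>z. h z + cnj (g z)) ` crit_set (\<lambda>z. h z + cnj (g z))
             \<union> cluster_set_infty (\<lambda>z. h z + cnj (g z))) = {}"
  shows "(is_polynomial_fun h \<and> is_polynomial_fun g)
       \<or> (\<not> is_polynomial_fun h \<and> \<not> is_polynomial_fun g)"
proof (rule ccontr)
  assume mixed: "\<not> ?thesis"
  have "cluster_set_infty (\<lambda>z. h z + cnj (g z)) = UNIV"
  proof (cases "is_polynomial_fun h")
    case True
    then obtain p where "h = poly p" unfolding is_polynomial_fun_def by blast
    moreover have "\<not> is_polynomial_fun g" using mixed True by blast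
    ultimately show ?thesis using cluster_set_infty_poly_add_cnj[OF assms(2)] by simp
  next
    case False
    then obtain q where g: "g = poly q" using mixed unfolding is_polynomial_fun_def by blast
    have "(\<lambda>z. cnj (h z + cnj (g z))) = (\<lambda>z. poly q z + cnj (h z))"
      unfolding g by (simp add: add.commute)
    then have "\<zeta> \<in> cluster_set_infty (\<lambda>z. h z + cnj (g z))" for \<zeta>
      using cnj_in_cluster_set_infty_cnj_iff[of \<zeta> "\<lambda>z. h z + cnj (g z)"]
        cluster_set_infty_poly_add_cnj[OF assms(1) False, of q] by simp
    then show ?thesis by auto
  qed
  with assms(3) show False by simp
qed

end
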